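(* Let $X$ be the vertex set of a connected simplicial graph with bounded geometry, equipped with the shortest path metric, which is $\delta$-hyperbolic, and fix $e\in X$ and $p\geq 1$. For $x\in X$, $k\in\mathbb{N}$, $n\in\mathbb{N}\setminus\{0\}$, let $F_{x,k,n}$ be the set of all points of $X\setminus B(e;3\delta)$ lying on $g([n,2n])$ for some geodesic $g$ from some $y$ with $d(x,y)\leq k$ to $e$ (parametrised by arc length starting at $y$), let $F(x,k,n)\in\ell^p(X)$ be its characteristic function, and set \[ H(x,n)=\frac{1}{n}\sum_{0\leq k\leq n/4}F(x,k,n). \] Then there exists a constant $C$ such that for all $R\geq 0$, all $n\geq 1$ and all $x,y\in X$ with $d(x,y)\leq R$, \[ \|H(x,n)-H(y,n)\|_p\leq 2C(R+1)\,n^{-\frac{p-1}{p}}. \]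
   Context: Bounded geometry: for every $r$ there is a uniform bound on the cardinality of balls of radius $r$. $\delta$-hyperbolicity in the Rips sense: each side of a geodesic triangle lies in the $\delta$-neighbourhood of the union of the other two. *)

theory Defs
  imports "HOL-Analysis.Analysis"
begin

definition simple_graph :: "('a \<Rightarrow> 'a \<Rightarrow> bool) \<Rightarrow> bool" where
  "simple_graph E \<longleftrightarrow> (\<forall>x y. E x y \<longrightarrow> E y x) \<and> (\<forall>x. \<not> E x x)"

definition walk :: "('a \<Rightarrow> 'a \<Rightarrow> bool) \<Rightarrow> (nat \<Rightarrow> 'a) \<Rightarrow> nat \<Rightarrow> bool" where
  "walk E g L \<longleftrightarrow> (\<forall>i<L. E (g i) (g (Suc i)))"

definition graph_connected :: "('a \<Rightarrow> 'a \<Rightarrow> bool) \<Rightarrow> bool" where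
  "graph_connected E \<longleftrightarrow> (\<forall>x y. \<exists>g L. g 0 = x \<and> g L = y \<and> walk E g L)"

definition gdist :: "('a \<Rightarrow> 'a \<Rightarrow> bool) \<Rightarrow> 'a \<Rightarrow> 'a \<Rightarrow> nat" where
  "gdist E x y = (LEAST L. \<exists>g. g 0 = x \<and> g L = y \<and> walk E g L)"

definition bounded_geometry :: "('a \<Rightarrow> 'a \<Rightarrow> bool) \<Rightarrow> bool" where
  "bounded_geometry E \<longleftrightarrow>
     (\<forall>r::real. \<exists>N::nat. \<forall>x. finite {y. real (gdist E x y) \<le> r} \<and> card {y. real (gdist E x y) \<le> r} \<le> N)"

definition geodesic :: "('a \<Rightarrow> 'a \<Rightarrow> bool) \<Rightarrow> (nat \<Rightarrow> 'a) \<Rightarrow> 'a \<Rightarrow> 'a \<Rightarrow> bool" where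
  "geodesic E g x y \<longleftrightarrow> g 0 = x \<and> g (gdist E x y) = y \<and> walk E g (gdist E x y)"

definition geod_image :: "('a \<Rightarrow> 'a \<Rightarrow> bool) \<Rightarrow> (nat \<Rightarrow> 'a) \<Rightarrow> 'a \<Rightarrow> 'a \<Rightarrow> 'a set" where
  "geod_image E g x y = g ` {0..gdist E x y}"

definition rips_hyperbolic :: "('a \<Rightarrow> 'a \<Rightarrow> bool) \<Rightarrow> real \<Rightarrow> bool" where
  "rips_hyperbolic E \<delta> \<longleftrightarrow>
     (\<forall>x y z g1 g2 g3. geodesic E g1 x y \<longrightarrow> geodesic E g2 y z \<longrightarrow> geodesic E g3 z x \<longrightarrow>
        (\<forall>u\<in>geod_image E g1 x y. \<exists>v\<in>geod_image E g2 y z \<union> geod_image E g3 z x.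
            real (gdist E u v) \<le> \<delta>))"

definition Fset :: "('a \<Rightarrow> 'a \<Rightarrow> bool) \<Rightarrow> real \<Rightarrow> 'a \<Rightarrow> 'a \<Rightarrow> nat \<Rightarrow> nat \<Rightarrow> 'a set" where
  "Fset E \<delta> e x k n =
     {z. \<not> (real (gdist E e z) \<le> 3 * \<delta>) \<and>
         (\<exists>y g i. gdist E x y \<le> k \<and> geodesic E g y e \<and> n \<le> i \<and> i \<le> 2 * n \<and>
                  i \<le> gdist E y e \<and> z = g i)}"

definition Ffun :: "('a \<Rightarrow> 'a \<Rightarrow> bool) \<Rightarrow> real \<Rightarrow> 'a \<Rightarrow> 'a \<Rightarrow> nat \<Rightarrow> nat \<Rightarrow> 'a \<Rightarrow> real" where
  "Ffun E \<delta> e x k n = indicator (Fset E \<delta> e x k n)"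

definition Hfun :: "('a \<Rightarrow> 'a \<Rightarrow> bool) \<Rightarrow> real \<Rightarrow> 'a \<Rightarrow> 'a \<Rightarrow> nat \<Rightarrow> 'a \<Rightarrow> real" where
  "Hfun E \<delta> e x n = (\<lambda>z. (1 / real n) * (\<Sum>k\<in>{k. 4 * k \<le> n}. Ffun E \<delta> e x k n z))"

text \<open>The l^p norm (functions considered here are finitely supported).\<close>
definition lp_norm :: "real \<Rightarrow> ('a \<Rightarrow> real) \<Rightarrow> real" where
  "lp_norm p f = (infsum (\<lambda>z. \<bar>f z\<bar> powr p) UNIV) powr (1 / p)"

end

theory Submission imports Defs begin

text \<open>
  Moving the base point from x to y changes each F(x,k,n) by at most a shift of k by d(x,y),
  because F(x,k,n) \<subseteq> F(y,k + d(x,y),n). Hence the averages H(x,n) and H(y,n) differ pointwise by at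
  most d(x,y)/n, and only on the support F(x,n/4,n) \<union> F(y,n/4,n). By hyperbolicity every point
  of F(x,k,n) lies within \<delta> of a window of length O(n) on one geodesic from e to x, so bounded
  geometry gives |F(x,k,n)| \<le> M n (for n \<le> 2\<delta> a ball of radius 6\<delta> already contains F(x,k,n)). The l^p norm of the difference is therefore at most
  (2 M n)^(1/p) d(x,y)/n.
\<close>

abbreviation gball :: "('a \<Rightarrow> 'a \<Rightarrow> bool) \<Rightarrow> 'a \<Rightarrow> real \<Rightarrow> 'a set" where
  "gball E x r \<equiv> {y. real (gdist E x y) \<le> r}"

lemma walk_gdist_exists:
  assumes "graph_connected E"
  shows "\<exists>g. g 0 = x \<and> g (gdist E x y) = y \<and> walk E g (gdist E x y)"
proof -
  from assms obtain g L where "g 0 = x \<and> g L = y \<and> walk E g L"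
    unfolding graph_connected_def by blast
  hence "\<exists>L g. g 0 = x \<and> g L = y \<and> walk E g L" by blast
  thus ?thesis unfolding gdist_def by (rule LeastI_ex)
qed

lemma geodesic_exists:
  assumes "graph_connected E"
  shows "\<exists>g. geodesic E g x y"
  using walk_gdist_exists[OF assms] unfolding geodesic_def by blast

lemma gdist_le_walk_length:
  assumes "g 0 = x" "g L = y" "walk E g L"
  shows "gdist E x y \<le> L"
  unfolding gdist_def by (rule Least_le) (use assms in blast)

lemma gdist_commute:
  assumes "simple_graph E" "graph_connected E"
  shows "gdist E y x = gdist E x y"
proof -
  have "gdist E y x \<le> gdist E x y" for x y
  proof -
    define L where "L = gdist E x y"
    obtain g where g: "g 0 = x" "g L = y" "walk E g L"
      using walk_gdist_exists[OF assms(2)] unfolding L_def by blast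
    have "walk E (\<lambda>i. g (L - i)) L"
      unfolding walk_def
    proof (intro allI impI)
      fix i assume "i < L"
      hence "E (g (L - Suc i)) (g (Suc (L - Suc i)))" using g(3) unfolding walk_def by simp
      hence "E (g (L - Suc i)) (g (L - i))" using \<open>i < L\<close> by (simp add: Suc_diff_Suc)
      thus "E (g (L - i)) (g (L - Suc i))" using assms(1) unfolding simple_graph_def by blast
    qed
    thus ?thesis using gdist_le_walk_length[of "\<lambda>i. g (L - i)" y L x E] g unfolding L_def by simp
  qed
  thus ?thesis by (simp add: le_antisym)
qed

lemma gdist_triangle:
  assumes "graph_connected E"
  shows "gdist E x z \<le> gdist E x y + gdist E y z"
proof -
  define L1 L2 where "L1 = gdist E x y" and "L2 = gdist E y z"
  obtain g1 where g1: "g1 0 = x" "g1 L1 = y" "walk E g1 L1"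
    using walk_gdist_exists[OF assms] unfolding L1_def by blast
  obtain g2 where g2: "g2 0 = y" "g2 L2 = z" "walk E g2 L2"
    using walk_gdist_exists[OF assms] unfolding L2_def by blast
  define g where "g = (\<lambda>i. if i \<le> L1 then g1 i else g2 (i - L1))"
  have "walk E g (L1 + L2)"
    unfolding walk_def
  proof (intro allI impI)
    fix i assume i: "i < L1 + L2"
    show "E (g i) (g (Suc i))"
    proof (cases "i < L1")
      case True
      thus ?thesis using g1(3) unfolding g_def walk_def by auto
    next
      case False
      hence "g i = g2 (i - L1)" "g (Suc i) = g2 (Suc (i - L1))"
        using g1(2) g2(1) unfolding g_def by (auto simp: Suc_diff_le)
      moreover have "i - L1 < L2" using i False by simp
      ultimately show ?thesis using g2(3) unfolding walk_def by auto
    qed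
  qed
  moreover have "g 0 = x" "g (L1 + L2) = z" using g1 g2 unfolding g_def by auto
  ultimately show ?thesis using gdist_le_walk_length unfolding L1_def L2_def by metis
qed

lemma geodesic_gdist:
  assumes "graph_connected E" "geodesic E g x y" "i \<le> gdist E x y"
  shows "gdist E x (g i) = i" and "gdist E (g i) y = gdist E x y - i"
proof -
  have g: "g 0 = x" "g (gdist E x y) = y" "walk E g (gdist E x y)"
    using assms(2) unfolding geodesic_def by auto
  have "walk E g i" using g(3) assms(3) unfolding walk_def by auto
  hence a: "gdist E x (g i) \<le> i" using gdist_le_walk_length g(1) by metis
  have "walk E (\<lambda>t. g (i + t)) (gdist E x y - i)" "g (i + (gdist E x y - i)) = y"
    using g(2,3) assms(3) unfolding walk_def by auto
  hence b: "gdist E (g i) y \<le> gdist E x y - i"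
    using gdist_le_walk_length[of "\<lambda>t. g (i + t)"] by simp
  have "gdist E x y \<le> gdist E x (g i) + gdist E (g i) y" by (rule gdist_triangle[OF assms(1)])
  thus "gdist E x (g i) = i" "gdist E (g i) y = gdist E x y - i" using a b assms(3) by linarith+
qed

lemma bounded_geometryE:
  assumes "bounded_geometry E"
  obtains N :: nat where "\<And>x. finite (gball E x r)" "\<And>x. card (gball E x r) \<le> N"
  using assms unfolding bounded_geometry_def by blast

lemma Fset_subset_gball:
  assumes "graph_connected E"
  shows "Fset E \<delta> e x K n \<subseteq> gball E x (K + 2 * n)"
proof
  fix z assume "z \<in> Fset E \<delta> e x K n"
  then obtain y g i where "gdist E x y \<le> K" "geodesic E g y e" "i \<le> 2 * n"
    "i \<le> gdist E y e" "z = g i" unfolding Fset_def by blast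
  moreover from this have "gdist E y z = i" using geodesic_gdist[OF assms] by blast
  ultimately have "gdist E x z \<le> K + 2 * n" using gdist_triangle[OF assms, of x z y] by linarith
  thus "z \<in> gball E x (K + 2 * n)" by simp
qed

lemma finite_Fset:
  assumes "graph_connected E" "bounded_geometry E"
  shows "finite (Fset E \<delta> e x K n)"
  using Fset_subset_gball[OF assms(1)] bounded_geometryE[OF assms(2)] finite_subset by metis

text \<open>
  For a point z = g i of F(x,K,n), apply hyperbolicity to the triangle formed by g (from y to e),
  a geodesic h from e to x and a geodesic from x to y: z is \<delta>-close to a point v on one of the
  other two sides. Since d(y,z) \<ge> n > 2\<delta> and d(x,y) \<le> K \<le> n/4, v cannot lie on the short side
  from x to y, so v = h j with j within K + 2n + \<delta> of d(e,x).
\<close>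
lemma Fset_subset_UN_gball_geodesic:
  assumes sg: "simple_graph E" and con: "graph_connected E" and hyp: "rips_hyperbolic E \<delta>"
    and h: "geodesic E h e x" and K: "4 * K \<le> n" and n: "2 * \<delta> < real n"
  shows "Fset E \<delta> e x K n \<subseteq>
    (\<Union>j\<in>{gdist E e x - (K + 2 * n + nat \<lceil>\<delta>\<rceil>)..gdist E e x}. gball E (h j) \<delta>)"
proof
  note sym = gdist_commute[OF sg con] and tri = gdist_triangle[OF con]
  fix z assume "z \<in> Fset E \<delta> e x K n"
  then obtain y g i where yg: "gdist E x y \<le> K" "geodesic E g y e" "n \<le> i" "i \<le> 2 * n"
    "i \<le> gdist E y e" "z = g i" unfolding Fset_def by blast
  have dz: "gdist E y z = i" "gdist E z e = gdist E y e - i"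
    using geodesic_gdist[OF con yg(2,5)] yg(6) by auto
  obtain g' where g': "geodesic E g' x y" using geodesic_exists[OF con] by blast
  have "z \<in> geod_image E g y e" unfolding geod_image_def using yg(5,6) by auto
  then obtain v where v: "v \<in> geod_image E h e x \<union> geod_image E g' x y" "real (gdist E v z) \<le> \<delta>"
    using hyp[unfolded rips_hyperbolic_def, rule_format, OF yg(2) h g'] sym by fastforce
  have "v \<notin> geod_image E g' x y"
  proof
    assume "v \<in> geod_image E g' x y"
    then obtain j where j: "j \<le> gdist E x y" "v = g' j" unfolding geod_image_def by auto
    have "gdist E y z \<le> gdist E y x + gdist E x v + gdist E v z"
      using tri[of y z x] tri[of x z v] by linarith
    moreover have "gdist E x v = j" using geodesic_gdist(1)[OF con g' j(1)] j(2) by simp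
    ultimately have "real n \<le> 2 * \<delta>" using dz yg(1,3) K j(1) v(2) sym[of x y] by linarith
    thus False using n by simp
  qed
  then obtain j where j: "j \<le> gdist E e x" "v = h j"
    using v(1) unfolding geod_image_def by auto
  have "gdist E e v = j" using geodesic_gdist(1)[OF con h j(1)] j(2) by simp
  moreover have "gdist E v z \<le> nat \<lceil>\<delta>\<rceil>" using v(2) by linarith
  moreover have "gdist E e z \<le> gdist E e v + gdist E v z" "gdist E x e \<le> gdist E x y + gdist E y e"
    using tri by blast+
  ultimately have window: "gdist E e x \<le> j + (K + 2 * n + nat \<lceil>\<delta>\<rceil>)"
    using yg(1,4,5) dz(2) sym[of x e] sym[of z e] by linarith
  show "z \<in> (\<Union>j\<in>{gdist E e x - (K + 2 * n + nat \<lceil>\<delta>\<rceil>)..gdist E e x}. gball E (h j) \<delta>)"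
  proof (rule UN_I)
    show "j \<in> {gdist E e x - (K + 2 * n + nat \<lceil>\<delta>\<rceil>)..gdist E e x}" using window j(1) by simp
    show "z \<in> gball E (h j) \<delta>" using v(2) j(2) by simp
  qed
qed

lemma card_Fset_le_window:
  assumes sg: "simple_graph E" and con: "graph_connected E" and hyp: "rips_hyperbolic E \<delta>"
    and N: "\<And>w. finite (gball E w \<delta>)" "\<And>w. card (gball E w \<delta>) \<le> N"
    and K: "4 * K \<le> n" and n: "2 * \<delta> < real n"
  shows "card (Fset E \<delta> e x K n) \<le> (K + 2 * n + nat \<lceil>\<delta>\<rceil> + 1) * N"
proof -
  obtain h where h: "geodesic E h e x" using geodesic_exists[OF con] by blast
  define J where "J = {gdist E e x - (K + 2 * n + nat \<lceil>\<delta>\<rceil>)..gdist E e x}"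
  have "card (Fset E \<delta> e x K n) \<le> card (\<Union>j\<in>J. gball E (h j) \<delta>)"
    using Fset_subset_UN_gball_geodesic[OF sg con hyp h K n] N(1)
    by (intro card_mono) (auto simp: J_def)
  also have "\<dots> \<le> (\<Sum>j\<in>J. card (gball E (h j) \<delta>))"
    by (rule card_UN_le) (simp add: J_def)
  also have "\<dots> \<le> card J * N"
    using sum_mono[of J "\<lambda>j. card (gball E (h j) \<delta>)" "\<lambda>_. N"] N(2) by simp
  also have "card J \<le> K + 2 * n + nat \<lceil>\<delta>\<rceil> + 1" unfolding J_def by simp
  finally show ?thesis by simp
qed

lemma card_Fset_le:
  assumes sg: "simple_graph E" and con: "graph_connected E" and bg: "bounded_geometry E"
    and hyp: "rips_hyperbolic E \<delta>" and "\<delta> \<ge> 0"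
  shows "\<exists>M \<ge> 1. \<forall>x n K. 1 \<le> n \<longrightarrow> 4 * K \<le> n \<longrightarrow> real (card (Fset E \<delta> e x K n)) \<le> M * real n"
proof -
  obtain N where N: "\<And>w. finite (gball E w \<delta>)" "\<And>w. card (gball E w \<delta>) \<le> N"
    using bounded_geometryE[OF bg] by metis
  obtain N' where N': "\<And>w. finite (gball E w (6 * \<delta>))" "\<And>w. card (gball E w (6 * \<delta>)) \<le> N'"
    using bounded_geometryE[OF bg] by metis
  define M where "M = real N' + (5 + \<delta>) * real N + 1"
  have M: "real N' \<le> M" "1 \<le> M" "0 \<le> (5 + \<delta>) * real N"
    using \<open>\<delta> \<ge> 0\<close> by (simp_all add: M_def)
  have "real (card (Fset E \<delta> e x K n)) \<le> M * real n" if n: "1 \<le> n" and K: "4 * K \<le> n" for x n K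
  proof (cases "real n \<le> 2 * \<delta>")
    case True
    have "Fset E \<delta> e x K n \<subseteq> gball E x (6 * \<delta>)"
      using Fset_subset_gball[OF con, of \<delta> e x K n] True K by auto
    hence "card (Fset E \<delta> e x K n) \<le> N'" using N' card_mono order_trans by metis
    moreover have "M \<le> M * real n" using M(2) n by simp
    ultimately show ?thesis using M(1) by linarith
  next
    case False
    have "real (card (Fset E \<delta> e x K n)) \<le> real (K + 2 * n + nat \<lceil>\<delta>\<rceil> + 1) * real N"
      using card_Fset_le_window[OF sg con hyp N K] False by (metis not_le of_nat_le_iff of_nat_mult)
    also have "\<dots> \<le> (5 + \<delta>) * real n * real N"
    proof (rule mult_right_mono)
      have "real K \<le> real n" "real (nat \<lceil>\<delta>\<rceil>) \<le> \<delta> + 1" "\<delta> \<le> \<delta> * real n"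
        using K \<open>\<delta> \<ge> 0\<close> n by (simp_all add: mult_le_cancel_left1)
      thus "real (K + 2 * n + nat \<lceil>\<delta>\<rceil> + 1) \<le> (5 + \<delta>) * real n"
        using n by (simp add: algebra_simps)
    qed simp
    also have "\<dots> \<le> M * real n"
      using M n by (simp add: M_def algebra_simps)
    finally show ?thesis .
  qed
  thus ?thesis using M(2) by blast
qed

lemma card_le_card_shift:
  fixes A B :: "nat set"
  assumes A: "A \<subseteq> {..K}" and B: "finite B" and shift: "\<And>k. k \<in> A \<Longrightarrow> k + d \<le> K \<Longrightarrow> k + d \<in> B"
  shows "card A \<le> card B + d"
proof -
  define A1 where "A1 = {k \<in> A. k + d \<le> K}"
  have fin: "finite A" using A finite_subset by blast
  have "card A = card A1 + card (A - A1)"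
    using fin card_Diff_subset[of A1 A] card_mono[of A A1] by (simp add: A1_def)
  moreover have "card A1 \<le> card B"
  proof -
    have "card A1 = card ((\<lambda>k. k + d) ` A1)" by (simp add: card_image)
    also have "\<dots> \<le> card B" using shift B by (intro card_mono) (auto simp: A1_def)
    finally show ?thesis .
  qed
  moreover have "card (A - A1) \<le> d"
  proof -
    have "A - A1 \<subseteq> {Suc K - d..K}" using A by (auto simp: A1_def subset_iff)
    hence "card (A - A1) \<le> card {Suc K - d..K}" by (intro card_mono) auto
    thus ?thesis by simp
  qed
  ultimately show ?thesis by linarith
qed

lemma Fset_mono: "k \<le> k' \<Longrightarrow> Fset E \<delta> e x k n \<subseteq> Fset E \<delta> e x k' n"
  unfolding Fset_def by (rule Collect_mono) (use le_trans in blast)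

lemma Fset_subset_Fset_add_gdist:
  assumes "simple_graph E" "graph_connected E"
  shows "Fset E \<delta> e x k n \<subseteq> Fset E \<delta> e y (k + gdist E x y) n"
proof
  fix z assume "z \<in> Fset E \<delta> e x k n"
  then obtain y' g i where z: "\<not> real (gdist E e z) \<le> 3 * \<delta>" "gdist E x y' \<le> k" "geodesic E g y' e"
     "n \<le> i" "i \<le> 2 * n" "i \<le> gdist E y' e" "z = g i" unfolding Fset_def by blast
  have "gdist E y y' \<le> gdist E y x + gdist E x y'" by (rule gdist_triangle[OF assms(2)])
  hence "gdist E y y' \<le> k + gdist E x y" using z(2) gdist_commute[OF assms, of x y] by simp
  thus "z \<in> Fset E \<delta> e y (k + gdist E x y) n" unfolding Fset_def using z by blast
qed

lemma Hfun_eq_card: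
  "Hfun E \<delta> e x n z = real (card {k. 4 * k \<le> n \<and> z \<in> Fset E \<delta> e x k n}) / real n"
proof -
  have "{k. 4 * k \<le> n} = {..n div 4}" by auto
  hence "finite {k. 4 * k \<le> n}" by simp
  thus ?thesis
    unfolding Hfun_def Ffun_def indicator_def by (simp add: sum.If_cases Int_def conj_commute)
qed

lemma abs_Hfun_diff_le:
  assumes "simple_graph E" "graph_connected E"
  shows "\<bar>Hfun E \<delta> e x n z - Hfun E \<delta> e y n z\<bar> \<le> real (gdist E x y) / real n"
proof -
  define A where "A x = {k. 4 * k \<le> n \<and> z \<in> Fset E \<delta> e x k n}" for x
  have A: "A x \<subseteq> {..n div 4}" for x by (auto simp: A_def)
  have "card (A x) \<le> card (A y) + gdist E x y" for x y
  proof (rule card_le_card_shift[OF A])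
    show "finite (A y)" using A finite_subset by blast
    show "k + gdist E x y \<in> A y" if "k \<in> A x" "k + gdist E x y \<le> n div 4" for k
      using that Fset_subset_Fset_add_gdist[OF assms, of \<delta> e x k n y] by (auto simp: A_def)
  qed
  hence "\<bar>real (card (A x)) - real (card (A y))\<bar> \<le> real (gdist E x y)"
    using gdist_commute[OF assms, of x y] by (smt (verit) of_nat_add of_nat_mono)
  thus ?thesis
    unfolding Hfun_eq_card A_def[symmetric] diff_divide_distrib[symmetric] abs_divide
    by (simp add: divide_right_mono)
qed

lemma Hfun_eq_0:
  assumes "z \<notin> Fset E \<delta> e x (n div 4) n"
  shows "Hfun E \<delta> e x n z = 0"
proof -
  have empty: "{k. 4 * k \<le> n \<and> z \<in> Fset E \<delta> e x k n} = {}"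
  proof (intro equalityI subsetI)
    fix k assume k: "k \<in> {k. 4 * k \<le> n \<and> z \<in> Fset E \<delta> e x k n}"
    hence "k \<le> n div 4" by auto
    thus "k \<in> {}" using k assms Fset_mono[of k "n div 4" E \<delta> e x n] by auto
  qed simp
  show ?thesis unfolding Hfun_eq_card empty by simp
qed

lemma lp_norm_le_card_powr:
  assumes S: "finite S" and supp: "\<And>z. z \<notin> S \<Longrightarrow> f z = 0" and bound: "\<And>z. \<bar>f z\<bar> \<le> a"
    and p: "p > 0"
  shows "lp_norm p f \<le> real (card S) powr (1 / p) * a"
proof -
  have a: "0 \<le> a" using bound[of undefined] by linarith
  have "infsum (\<lambda>z. \<bar>f z\<bar> powr p) UNIV = (\<Sum>z\<in>S. \<bar>f z\<bar> powr p)"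
    using S by (subst infsum_cong_neutral[where T = S]) (auto simp: supp)
  also have "\<dots> \<le> (\<Sum>z\<in>S. a powr p)"
    using bound p by (intro sum_mono powr_mono2) auto
  also have "\<dots> = real (card S) * a powr p" by simp
  finally have "lp_norm p f \<le> (real (card S) * a powr p) powr (1 / p)"
    unfolding lp_norm_def using p by (intro powr_mono2 infsum_nonneg) auto
  also have "\<dots> = real (card S) powr (1 / p) * a"
    using a p by (simp add: powr_mult powr_powr)
  finally show ?thesis .
qed

lemma powr_card_bound_le:
  fixes M c n p R :: real
  assumes "1 \<le> M" "1 \<le> n" "1 \<le> p" "0 \<le> c" "c \<le> 2 * M * n" "0 \<le> R"
  shows "c powr (1 / p) * (R / n) \<le> 2 * M * (R + 1) * n powr (- ((p - 1) / p))"
proof -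
  have "c powr (1 / p) \<le> (2 * M) powr (1 / p) * n powr (1 / p)"
    using assms by (simp add: powr_mono2 flip: powr_mult)
  also have "(2 * M) powr (1 / p) \<le> 2 * M"
    using powr_mono[of "1 / p" 1 "2 * M"] assms by simp
  finally have "c powr (1 / p) * (R / n) \<le> 2 * M * n powr (1 / p) * (R / n)"
    using assms by (intro mult_right_mono) auto
  also have "n powr (1 / p) / n = n powr (- ((p - 1) / p))"
  proof -
    have "- ((p - 1) / p) = 1 / p - 1" using assms by (simp add: field_simps)
    thus ?thesis using assms by (simp add: powr_diff)
  qed
  hence "2 * M * n powr (1 / p) * (R / n) = 2 * M * R * n powr (- ((p - 1) / p))"
    by (metis (no_types, lifting) mult.commute mult.left_commute times_divide_eq_right)
  also have "\<dots> \<le> 2 * M * (R + 1) * n powr (- ((p - 1) / p))"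
    using assms by (intro mult_right_mono) auto
  finally show ?thesis .
qed

theorem lemma3p4:
  fixes E :: "'a \<Rightarrow> 'a \<Rightarrow> bool" and \<delta> p :: real and e :: 'a
  assumes "simple_graph E" and "graph_connected E" and "bounded_geometry E"
    and "\<delta> \<ge> 0" and "rips_hyperbolic E \<delta>" and "p \<ge> 1"
  shows "\<exists>C::real. \<forall>R::real. \<forall>n::nat. \<forall>x y. R \<ge> 0 \<longrightarrow> n \<ge> 1 \<longrightarrow> real (gdist E x y) \<le> R \<longrightarrow>
     lp_norm p (\<lambda>z. Hfun E \<delta> e x n z - Hfun E \<delta> e y n z)
       \<le> 2 * C * (R + 1) * real n powr (- ((p - 1) / p))"
proof -
  obtain M where M: "M \<ge> 1"
    and card_F: "\<And>x n K. 1 \<le> n \<Longrightarrow> 4 * K \<le> n \<Longrightarrow> real (card (Fset E \<delta> e x K n)) \<le> M * real n"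
    using card_Fset_le[OF assms(1-3,5,4)] by blast
  have "lp_norm p (\<lambda>z. Hfun E \<delta> e x n z - Hfun E \<delta> e y n z)
       \<le> 2 * M * (R + 1) * real n powr (- ((p - 1) / p))"
    if "R \<ge> 0" "n \<ge> 1" "real (gdist E x y) \<le> R" for R n x y
  proof -
    define S where "S = Fset E \<delta> e x (n div 4) n \<union> Fset E \<delta> e y (n div 4) n"
    have "finite S" using finite_Fset[OF assms(2,3)] by (simp add: S_def)
    have "real (card S) \<le> 2 * M * real n"
      using card_Un_le[of "Fset E \<delta> e x (n div 4) n" "Fset E \<delta> e y (n div 4) n"]
        card_F[OF \<open>n \<ge> 1\<close>, of "n div 4" x] card_F[OF \<open>n \<ge> 1\<close>, of "n div 4" y]
      unfolding S_def by linarith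
    have "lp_norm p (\<lambda>z. Hfun E \<delta> e x n z - Hfun E \<delta> e y n z) \<le> real (card S) powr (1 / p) * (R / real n)"
    proof (rule lp_norm_le_card_powr[OF \<open>finite S\<close>])
      show "Hfun E \<delta> e x n z - Hfun E \<delta> e y n z = 0" if "z \<notin> S" for z
        using that Hfun_eq_0[of z] by (simp add: S_def)
      show "\<bar>Hfun E \<delta> e x n z - Hfun E \<delta> e y n z\<bar> \<le> R / real n" for z
        using abs_Hfun_diff_le[OF assms(1,2)] that(3) divide_right_mono order_trans of_nat_0_le_iff by metis
    qed (use assms(6) in simp)
    also have "\<dots> \<le> 2 * M * (R + 1) * real n powr (- ((p - 1) / p))"
      using \<open>real (card S) \<le> 2 * M * real n\<close> M that assms(6) by (intro powr_card_bound_le) auto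
    finally show ?thesis .
  qed
  thus ?thesis by blast
qed

end
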